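(* Let $G$ be a finite group such that (a) the Gruenberg--Kegel graph of $G$ is connected, and (b) for every Sylow subgroup $P$ of $G$, the centre $Z(P)$ is non-cyclic. Then the induced subgraph of $(\mathrm{Com}-\mathrm{Pow})(G)$ on $G\setminus\{1\}$ either has an isolated vertex or is connected.
   Context: $(\mathrm{Com}-\mathrm{Pow})(G)$ is the graph on vertex set $G$ in which distinct $x,y$ are adjacent iff $xy=yx$ and neither of $x,y$ is a power of the other. The Gruenberg--Kegel graph of $G$ has vertex set the primes dividing $|G|$, distinct primes $p,q$ being adjacent iff $G$ has an element of order $pq$. *)

theory Defs
  imports "HOL-Algebra.Algebra"
begin

definition graph_connected :: "'v set \<Rightarrow> ('v \<Rightarrow> 'v \<Rightarrow> bool) \<Rightarrow> bool" where
  "graph_connected V E \<longleftrightarrow>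
     (\<forall>u\<in>V. \<forall>v\<in>V. (u, v) \<in> {(x, y). x \<in> V \<and> y \<in> V \<and> E x y}\<^sup>*)"

definition has_isolated_vertex :: "'v set \<Rightarrow> ('v \<Rightarrow> 'v \<Rightarrow> bool) \<Rightarrow> bool" where
  "has_isolated_vertex V E \<longleftrightarrow> (\<exists>v\<in>V. \<not> (\<exists>w\<in>V. w \<noteq> v \<and> E v w))"

definition GK_vertices :: "('a, 'b) monoid_scheme \<Rightarrow> nat set" where
  "GK_vertices G = {p. Factorial_Ring.prime p \<and> p dvd order G}"

definition GK_adj :: "('a, 'b) monoid_scheme \<Rightarrow> nat \<Rightarrow> nat \<Rightarrow> bool" where
  "GK_adj G p q \<longleftrightarrow> p \<noteq> q \<and> (\<exists>x\<in>carrier G. group.ord G x = p * q)"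

definition is_power_of :: "('a, 'b) monoid_scheme \<Rightarrow> 'a \<Rightarrow> 'a \<Rightarrow> bool" where
  "is_power_of G x y \<longleftrightarrow> (\<exists>k::int. x = y [^]\<^bsub>G\<^esub> k)"

definition ComPow_adj :: "('a, 'b) monoid_scheme \<Rightarrow> 'a \<Rightarrow> 'a \<Rightarrow> bool" where
  "ComPow_adj G x y \<longleftrightarrow> x \<noteq> y \<and> x \<otimes>\<^bsub>G\<^esub> y = y \<otimes>\<^bsub>G\<^esub> x
      \<and> \<not> is_power_of G x y \<and> \<not> is_power_of G y x"

definition sylow_subgroup :: "('a, 'b) monoid_scheme \<Rightarrow> nat \<Rightarrow> 'a set \<Rightarrow> bool" where
  "sylow_subgroup G p P \<longleftrightarrow> Factorial_Ring.prime p \<and> p dvd order G \<and> subgroup P G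
      \<and> card P = p ^ multiplicity p (order G)"

definition group_centre :: "('a, 'b) monoid_scheme \<Rightarrow> 'a set \<Rightarrow> 'a set" where
  "group_centre G P = {z \<in> P. \<forall>x\<in>P. z \<otimes>\<^bsub>G\<^esub> x = x \<otimes>\<^bsub>G\<^esub> z}"

end

theory Submission
  imports Defs
begin

(* Let P be a Sylow p-subgroup. Its centre is a non-cyclic abelian p-group, so it has at least
   two subgroups of order p; hence every x in P - {1} commutes with a central element of order p
   outside the cyclic subgroup generated by x, and any two such central elements are adjacent or
   have a common neighbour. So P - {1} lies in one component of the Com-Pow graph.
   Conjugation is a graph automorphism, and for x of prime-power order the conjugators h with
   h x h^-1 in the component of x form a subgroup N. An element g of order pq gives the edge
   g^q -- g^p between a p-element and a q-element, so along the connected Gruenberg--Kegel graph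
   every prime has a Sylow subgroup meeting the component of x; each such Sylow subgroup lies in N,
   hence N = G and the component contains all non-trivial elements of prime-power order.
   Finally, if y is not isolated, it has a neighbour w outside the cyclic subgroup generated by y,
   and some power of w of prime-power order is still outside it and adjacent to y. *)

section \<open>Cyclic subgroups\<close>

lemma (in group) is_power_of_iff_in_generate:
  assumes "x \<in> carrier G"
  shows "is_power_of G y x \<longleftrightarrow> y \<in> generate G {x}"
  unfolding is_power_of_def generate_pow[OF assms] by auto

lemma (in group) nat_pow_in_generate:
  assumes "x \<in> carrier G"
  shows "x [^] (n::nat) \<in> generate G {x}"
  using assms generate_pow int_pow_int by (metis (mono_tags, lifting) UNIV_I mem_Collect_eq)

lemma (in group) generate_singleton_mono:
  assumes "x \<in> carrier G" "y \<in> generate G {x}"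
  shows "generate G {y} \<subseteq> generate G {x}"
  using generate_subgroup_incl[of "{y}" "generate G {x}"] generate_is_subgroup[of "{x}"] assms
  by auto

lemma (in group) card_subgroup_dvd:
  assumes "subgroup I G" "subgroup J G" "I \<subseteq> J"
  shows "card I dvd card J"
proof -
  interpret J: group "G\<lparr>carrier := J\<rparr>"
    using subgroup_imp_group[OF assms(2)] .
  have "card (rcosets\<^bsub>G\<lparr>carrier := J\<rparr>\<^esub> I) * card I = card J"
    using J.lagrange[OF subgroup_incl[OF assms]] by (simp add: order_def)
  thus ?thesis by (metis dvd_triv_right)
qed

lemma (in group) ord_dvd_card_subgroup:
  assumes "subgroup K G" "x \<in> K"
  shows "ord x dvd card K"
proof -
  have x: "x \<in> carrier G" using assms subgroup.subset by blast
  have "generate G {x} \<subseteq> K" using generate_subgroup_incl[of "{x}" K] assms by auto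
  thus ?thesis
    using card_subgroup_dvd generate_is_subgroup assms x generate_pow_card[OF x] by auto
qed

lemma (in group) ord_dvd_ord_of_generate:
  assumes "x \<in> carrier G" "y \<in> generate G {x}"
  shows "ord y dvd ord x"
  using ord_dvd_card_subgroup[of "generate G {x}" y] generate_is_subgroup[of "{x}"] assms
    generate_pow_card[OF assms(1)]
  by auto

lemma (in group) in_generate_coprime_pow:
  assumes y: "y \<in> carrier G" and coprime: "coprime t (ord y)"
  shows "y \<in> generate G {y [^] (t::nat)}"
proof (cases "t = 0")
  case True
  hence "y = \<one>" using coprime ord_eq_1[OF y] by simp
  thus ?thesis using generate.one by simp
next
  case False
  obtain u v where "t * u = ord y * v + 1"
    using bezout_nat[OF False, of "ord y"] coprime by auto
  hence "(y [^] t) [^] u = y [^] (ord y * v) \<otimes> y"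
    using y by (simp add: nat_pow_pow nat_pow_mult[symmetric])
  also have "\<dots> = y" using y by (simp add: nat_pow_pow[symmetric])
  finally show ?thesis using nat_pow_in_generate[of "y [^] t" u] y by simp
qed

lemma (in group) ord_pow_prime_power:
  assumes x: "x \<in> carrier G" and p: "Factorial_Ring.prime p" and ord_x: "ord x = p ^ n" and n: "n > 0"
  shows "ord (x [^] (p ^ (n - 1))) = p"
proof -
  have "p ^ n = p ^ (n - 1) * p" using n by (simp add: power_eq_if)
  thus ?thesis using ord_pow[OF x] ord_x p by (simp add: prime_gt_0_nat)
qed

lemma (in group) in_generate_of_same_prime_ord:
  assumes fin: "finite (carrier G)" and p: "Factorial_Ring.prime p" and x: "x \<in> carrier G"
    and w: "w \<in> generate G {x}" "ord w = p" and z: "z \<in> generate G {x}" "ord z = p"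
  shows "w \<in> generate G {z}"
proof -
  have N: "ord x \<noteq> 0" using ord_ge_1[OF fin x] by simp
  obtain i j :: nat where i: "w = x [^] i" and j: "z = x [^] j"
    using w(1) z(1) generate_pow_nat[OF x N] by auto
  have gcd_eq: "gcd (ord x) k = ord x div p" if "ord (x [^] k) = p" for k :: nat
  proof -
    have "k \<noteq> 0" using that p by (metis nat_pow_0 ord_id not_prime_1)
    hence "ord x div gcd (ord x) k = p" using that ord_pow_gen[OF x] by simp
    thus ?thesis using p N
      by (metis dvd_div_mult_self gcd_dvd1 div_mult_self1_is_m prime_gt_0_nat)
  qed
  define d where "d = ord x div p"
  have "j \<noteq> 0" using z(2) j p by (metis nat_pow_0 ord_id not_prime_1)
  then obtain u v where "j * u = ord x * v + d"
    using bezout_nat[of j "ord x"] gcd_eq[of j] z(2) j d_def by (auto simp: gcd.commute)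
  hence "z [^] u = x [^] d" using x j by (simp add: nat_pow_pow nat_pow_mult[symmetric] pow_eq_id)
  hence "x [^] d \<in> generate G {z}" using nat_pow_in_generate[of z u] j x by simp
  hence "generate G {x [^] d} \<subseteq> generate G {z}"
    using generate_singleton_mono j x by simp
  moreover have "w \<in> generate G {x [^] d}"
  proof -
    have "d dvd i" using gcd_eq[of i] w(2) i d_def by (metis gcd_dvd2)
    then obtain m where "i = d * m" by blast
    thus ?thesis using i x nat_pow_in_generate[of "x [^] d" m] by (simp add: nat_pow_pow)
  qed
  ultimately show ?thesis by blast
qed

lemma (in group) ord_less_if_generate_psubset:
  assumes y: "y \<in> carrier G" "ord y \<noteq> 0"
    and z: "z \<in> generate G {y}" "y \<notin> generate G {z}"
  shows "ord z < ord y"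
proof -
  have "subgroup (generate G {y}) G" using generate_is_subgroup y(1) by simp
  hence z_carrier: "z \<in> carrier G" using z(1) by (rule subgroup.mem_carrier)
  have "generate G {z} \<subset> generate G {y}"
    using generate_singleton_mono[OF y(1) z(1)] z(2) generate.incl[of y "{y}"] by blast
  moreover have "finite (generate G {y})" using generate_pow_card[OF y(1)] y(2) card_ge_0_finite by simp
  ultimately have "card (generate G {z}) < card (generate G {y})" by (metis psubset_card_mono)
  thus ?thesis using generate_pow_card z_carrier y(1) by simp
qed

lemma (in group) subgroup_nat_pow_closed:
  assumes "subgroup H G" "x \<in> H"
  shows "x [^] (n::nat) \<in> H"
  using subgroup_int_pow_closed[OF assms, of "int n"] int_pow_int by metis

section \<open>Centres of Sylow subgroups\<close>

lemma (in group) exists_outside_with_pth_power_inside: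
  assumes Z: "subgroup Z G" and H: "subgroup H G" and p: "Factorial_Ring.prime p"
    and p_elems: "\<And>u. u \<in> Z \<Longrightarrow> \<exists>k. ord u = p ^ k" and not_subset: "\<not> Z \<subseteq> H"
  shows "\<exists>y \<in> Z - H. y [^] p \<in> H"
proof -
  obtain y where y: "y \<in> Z - H" and y_min: "\<And>u. u \<in> Z - H \<Longrightarrow> ord y \<le> ord u"
    using ex_has_least_nat[of "\<lambda>u. u \<in> Z - H" _ ord] not_subset by blast
  have y_carrier: "y \<in> carrier G" using y Z subgroup.subset by blast
  obtain k where k: "ord y = p ^ k" using p_elems y by blast
  have "y \<noteq> \<one>" using y subgroup.one_closed[OF H] by blast
  hence "k \<noteq> 0" using k ord_eq_1[OF y_carrier] by auto
  hence "ord (y [^] p) = p ^ k div p"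
    using ord_pow[OF y_carrier, of p] k p by (simp add: prime_gt_0_nat)
  also have "\<dots> < ord y"
    unfolding k using prime_gt_1_nat[OF p] prime_gt_0_nat[OF p] by (intro div_less_dividend) auto
  moreover have "y [^] p \<in> Z" using y Z subgroup_nat_pow_closed by blast
  ultimately have "y [^] p \<in> H" using y_min by fastforce
  thus ?thesis using y by blast
qed

lemma (in group) prime_ord_elem_outside_cyclic_of_max_ord:
  assumes Z: "subgroup Z G" and p: "Factorial_Ring.prime p"
    and p_elems: "\<And>u. u \<in> Z \<Longrightarrow> \<exists>k. ord u = p ^ k"
    and comm: "\<And>a b. a \<in> Z \<Longrightarrow> b \<in> Z \<Longrightarrow> a \<otimes> b = b \<otimes> a"
    and z: "z \<in> Z" and z_max: "\<And>u. u \<in> Z \<Longrightarrow> ord u \<le> ord z"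
    and y: "y \<in> Z" "y \<notin> generate G {z}" "y [^] p \<in> generate G {z}"
  shows "\<exists>w \<in> Z. ord w = p \<and> w \<notin> generate G {z}"
proof -
  have Zc: "\<And>u. u \<in> Z \<Longrightarrow> u \<in> carrier G" using Z subgroup.subset by blast
  obtain n where n: "ord z = p ^ n" using p_elems z by blast
  obtain k where k: "ord y = p ^ k" using p_elems y(1) by blast
  have "ord z \<noteq> 0" using n p by simp
  then obtain j :: nat where j: "y [^] p = z [^] j"
    using y(3) generate_pow_nat[OF Zc[OF z]] by auto
  \<comment> \<open>If p does not divide j then z is a power of y, contradicting the maximality of ord z;
    otherwise y z^(-j/p) has order p.\<close>
  show ?thesis
  proof (cases "p dvd j")
    case False
    hence "coprime j (ord z)" using prime_imp_coprime[OF p False] n by (simp add: coprime_commute)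
    hence "z \<in> generate G {y [^] p}" using in_generate_coprime_pow[OF Zc[OF z]] j by simp
    hence "z \<in> generate G {y}"
      using generate_singleton_mono[OF Zc[OF y(1)] nat_pow_in_generate[OF Zc[OF y(1)]]] by blast
    moreover have "ord y \<noteq> 0" using k p by simp
    ultimately have "ord z < ord y" using ord_less_if_generate_psubset Zc[OF y(1)] y(2) by blast
    thus ?thesis using z_max[OF y(1)] by simp
  next
    case True
    then obtain j' where j': "j = p * j'" by blast
    define w where "w = y \<otimes> inv (z [^] j')"
    have zj': "z [^] j' \<in> generate G {z}" using nat_pow_in_generate Zc z by blast
    have zj'_Z: "z [^] j' \<in> Z" using z Z subgroup_nat_pow_closed by blast
    have w_Z: "w \<in> Z" using w_def y(1) zj'_Z Z by (simp add: subgroup.m_closed subgroup.m_inv_closed)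
    have "w [^] p = y [^] p \<otimes> inv (z [^] j') [^] p"
      using w_def comm y(1) zj'_Z Z Zc pow_mult_distrib
      by (metis subgroup.m_inv_closed inv_closed)
    also have "\<dots> = \<one>"
      using j j' Zc[OF z] Zc[OF y(1)] by (simp add: nat_pow_inv nat_pow_pow mult.commute)
    finally have w_pow: "w [^] p = \<one>" .
    have w_out: "w \<notin> generate G {z}"
    proof
      assume "w \<in> generate G {z}"
      hence "w \<otimes> z [^] j' \<in> generate G {z}"
        using zj' generate_is_subgroup Zc[OF z] by (simp add: subgroup.m_closed)
      thus False using w_def y Zc[OF z] Zc[OF y(1)] by (simp add: m_assoc)
    qed
    hence "w \<noteq> \<one>" using generate.one by blast
    hence "ord w = p"
      using w_pow pow_eq_id Zc[OF w_Z] ord_eq_1 p by (metis prime_nat_iff)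
    thus ?thesis using w_Z w_out by blast
  qed
qed

lemma (in group) cyclic_if_prime_ord_elems_in_cyclic:
  assumes fin: "finite (carrier G)" and Z: "subgroup Z G" and p: "Factorial_Ring.prime p"
    and p_elems: "\<And>u. u \<in> Z \<Longrightarrow> \<exists>k. ord u = p ^ k"
    and comm: "\<And>a b. a \<in> Z \<Longrightarrow> b \<in> Z \<Longrightarrow> a \<otimes> b = b \<otimes> a"
    and x: "x \<in> carrier G" and in_x: "\<And>w. w \<in> Z \<Longrightarrow> ord w = p \<Longrightarrow> w \<in> generate G {x}"
  shows "cyclic_group (G\<lparr>carrier := Z\<rparr>)"
proof -
  have Zc: "\<And>u. u \<in> Z \<Longrightarrow> u \<in> carrier G" using Z subgroup.subset by blast
  obtain z where z: "z \<in> Z" and z_max: "\<And>u. u \<in> Z \<Longrightarrow> ord u \<le> ord z"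
    using ex_has_greatest_nat[of "\<lambda>u. u \<in> Z" \<one> ord "Suc (order G)"] subgroup.one_closed[OF Z]
      ord_le_group_order[OF fin] Zc by (metis less_Suc_eq_le)
  have gen_z: "generate G {z} \<subseteq> Z" using generate_subgroup_incl[of "{z}" Z] Z z by auto
  have "Z \<subseteq> generate G {z}"
  proof (rule ccontr)
    assume not_subset: "\<not> Z \<subseteq> generate G {z}"
    obtain y where "y \<in> Z - generate G {z}" "y [^] p \<in> generate G {z}"
      using exists_outside_with_pth_power_inside[OF Z _ p p_elems not_subset]
        generate_is_subgroup Zc[OF z] by auto
    then obtain w where w: "w \<in> Z" "ord w = p" "w \<notin> generate G {z}"
      using prime_ord_elem_outside_cyclic_of_max_ord[OF Z p p_elems comm z z_max] by blast
    \<comment> \<open>w and the element of order p in <z> both lie in <x>, which has only one subgroup of order p\<close>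
    obtain n where n: "ord z = p ^ n" using p_elems z by blast
    have n_pos: "n > 0" using z_max[OF w(1)] w(2) n prime_gt_1_nat[OF p] by (cases n) auto
    define z' where "z' = z [^] (p ^ (n - 1))"
    have z'_ord: "ord z' = p" using ord_pow_prime_power[OF Zc[OF z] p n n_pos] z'_def by simp
    have z'_gen: "z' \<in> generate G {z}" using nat_pow_in_generate Zc[OF z] z'_def by blast
    hence "w \<in> generate G {z'}"
      using in_generate_of_same_prime_ord[OF fin p x in_x[OF w(1,2)] w(2)] in_x z'_ord gen_z
      by blast
    thus False using generate_singleton_mono[OF Zc[OF z] z'_gen] w(3) by blast
  qed
  hence "Z = generate G {z}" using gen_z by blast
  moreover have "carrier G \<inter> {z} = {z}" using Zc[OF z] by blast
  ultimately show ?thesis using cyclic_group_generated[of z] unfolding subgroup_generated_def by simp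
qed

lemma (in group) group_centre_subgroup:
  assumes P: "subgroup P G"
  shows "subgroup (group_centre G P) G"
proof (rule subgroupI)
  have Pc: "\<And>x. x \<in> P \<Longrightarrow> x \<in> carrier G" using subgroup.mem_carrier[OF P] .
  show "group_centre G P \<subseteq> carrier G" using Pc unfolding group_centre_def by auto
  show "group_centre G P \<noteq> {}"
    using subgroup.one_closed[OF P] Pc unfolding group_centre_def by auto
  show "inv a \<in> group_centre G P" if a: "a \<in> group_centre G P" for a
  proof -
    have aP: "a \<in> P" and a_comm: "\<And>x. x \<in> P \<Longrightarrow> a \<otimes> x = x \<otimes> a"
      using a unfolding group_centre_def by auto
    have "inv a \<otimes> x = x \<otimes> inv a" if x: "x \<in> P" for x
    proof -
      have "inv a \<otimes> x = inv a \<otimes> (x \<otimes> a) \<otimes> inv a" using Pc aP x by (simp add: m_assoc)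
      also have "\<dots> = x \<otimes> inv a" using a_comm[OF x, symmetric] x Pc aP by (simp add: m_assoc[symmetric])
      finally show ?thesis .
    qed
    thus ?thesis using subgroup.m_inv_closed[OF P aP] unfolding group_centre_def by auto
  qed
  show "a \<otimes> b \<in> group_centre G P" if "a \<in> group_centre G P" "b \<in> group_centre G P" for a b
  proof -
    have aP: "a \<in> P" and bP: "b \<in> P"
      and a_comm: "\<And>x. x \<in> P \<Longrightarrow> a \<otimes> x = x \<otimes> a" and b_comm: "\<And>x. x \<in> P \<Longrightarrow> b \<otimes> x = x \<otimes> b"
      using that unfolding group_centre_def by auto
    have "a \<otimes> b \<otimes> x = x \<otimes> (a \<otimes> b)" if x: "x \<in> P" for x
    proof -
      have "a \<otimes> b \<otimes> x = a \<otimes> (x \<otimes> b)" using b_comm[OF x] x aP bP Pc by (simp add: m_assoc)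
      also have "\<dots> = x \<otimes> (a \<otimes> b)" using a_comm[OF x] x aP bP Pc by (simp add: m_assoc[symmetric])
      finally show ?thesis .
    qed
    thus ?thesis using subgroup.m_closed[OF P aP bP] unfolding group_centre_def by blast
  qed
qed

lemma (in group) ord_sylow_subgroup_elem:
  assumes S: "sylow_subgroup G p P" and x: "x \<in> P"
  shows "\<exists>k. ord x = p ^ k"
proof -
  have "ord x dvd p ^ multiplicity p (order G)"
    using S ord_dvd_card_subgroup x unfolding sylow_subgroup_def by metis
  thus ?thesis using divides_primepow_nat S unfolding sylow_subgroup_def by blast
qed

lemma (in group) sylow_centre_prime_ord_elem_not_in_generate:
  assumes fin: "finite (carrier G)" and S: "sylow_subgroup G p P"
    and not_cyclic: "\<not> cyclic_group (G\<lparr>carrier := group_centre G P\<rparr>)" and x: "x \<in> carrier G"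
  shows "\<exists>z \<in> group_centre G P. ord z = p \<and> z \<notin> generate G {x}"
proof -
  have P: "subgroup P G" and p: "Factorial_Ring.prime p" using S unfolding sylow_subgroup_def by auto
  show ?thesis
  proof (rule ccontr)
    assume "\<not> ?thesis"
    hence "\<And>w. w \<in> group_centre G P \<Longrightarrow> ord w = p \<Longrightarrow> w \<in> generate G {x}" by blast
    moreover have "\<And>u. u \<in> group_centre G P \<Longrightarrow> \<exists>k. ord u = p ^ k"
      using ord_sylow_subgroup_elem[OF S] unfolding group_centre_def by blast
    moreover have "\<And>a b. a \<in> group_centre G P \<Longrightarrow> b \<in> group_centre G P \<Longrightarrow> a \<otimes> b = b \<otimes> a"
      unfolding group_centre_def by blast
    ultimately show False
      using cyclic_if_prime_ord_elems_in_cyclic[OF fin group_centre_subgroup[OF P] p _ _ x] not_cyclic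
      by blast
  qed
qed

section \<open>Conjugation and Sylow subgroups\<close>

lemma (in group) inv_mult_cancel_left [simp]:
  "h \<in> carrier G \<Longrightarrow> x \<in> carrier G \<Longrightarrow> inv h \<otimes> (h \<otimes> x) = x"
  by (simp add: m_assoc[symmetric])

lemma (in group) conj_eq_one_iff [simp]:
  assumes "h \<in> carrier G" "x \<in> carrier G"
  shows "h \<otimes> x \<otimes> inv h = \<one> \<longleftrightarrow> x = \<one>"
  using assms conjugation_is_inj[of h x \<one>] by auto

lemma (in group) conj_group_hom:
  assumes "h \<in> carrier G"
  shows "group_hom G G (\<lambda>x. h \<otimes> x \<otimes> inv h)"
  using assms unfolding group_hom_def group_hom_axioms_def hom_def
  by (auto simp: is_group m_assoc)

lemma (in group) conj_nat_pow:
  assumes "h \<in> carrier G" "x \<in> carrier G"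
  shows "(h \<otimes> x \<otimes> inv h) [^] (n::nat) = h \<otimes> x [^] n \<otimes> inv h"
  using group_hom.hom_nat_pow[OF conj_group_hom[OF assms(1)] assms(2)] by simp

lemma (in group) conj_int_pow:
  assumes "h \<in> carrier G" "x \<in> carrier G"
  shows "(h \<otimes> x \<otimes> inv h) [^] (k::int) = h \<otimes> x [^] k \<otimes> inv h"
  using group_hom.hom_int_pow[OF conj_group_hom[OF assms(1)] assms(2)] by simp

lemma (in group) ord_conj:
  assumes h: "h \<in> carrier G" and x: "x \<in> carrier G"
  shows "ord (h \<otimes> x \<otimes> inv h) = ord x"
proof -
  have "(h \<otimes> x \<otimes> inv h) [^] n = \<one> \<longleftrightarrow> ord x dvd n" for n :: nat
    using conj_nat_pow[OF h x] pow_eq_id[OF x] h x by simp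
  thus ?thesis using ord_unique[of "h \<otimes> x \<otimes> inv h" "ord x"] h x by simp
qed

lemma (in group) sylow_subgroup_conj:
  assumes S: "sylow_subgroup G p S" and h: "h \<in> carrier G"
  shows "sylow_subgroup G p ((\<lambda>s. h \<otimes> s \<otimes> inv h) ` S)"
proof -
  have "subgroup S G" using S unfolding sylow_subgroup_def by blast
  hence "subgroup ((\<lambda>s. h \<otimes> s \<otimes> inv h) ` S) G"
    "card ((\<lambda>s. h \<otimes> s \<otimes> inv h) ` S) = card S"
    using group_hom.subgroup_img_is_subgroup[OF conj_group_hom[OF h]] h
    by (auto intro!: card_image inj_onI dest: subgroup.mem_carrier conjugation_is_inj)
  thus ?thesis using S unfolding sylow_subgroup_def by simp
qed

lemma (in group) rcosets_mult_closed:
  assumes S: "subgroup S G" and C: "C \<in> rcosets S" and a: "a \<in> carrier G"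
  shows "C #> a \<in> rcosets S"
proof -
  obtain g where g: "g \<in> carrier G" "C = S #> g" using C unfolding RCOSETS_def by auto
  hence "C #> a = S #> (g \<otimes> a)" using coset_mult_assoc[OF subgroup.subset[OF S]] a by simp
  thus ?thesis using g a by (simp add: rcosetsI subgroup.subset[OF S])
qed

lemma (in group) rcosets_right_action:
  assumes S: "subgroup S G" and H: "subgroup H G"
  shows "group_action (G\<lparr>carrier := H\<rparr>) (rcosets S) (\<lambda>h. \<lambda>C \<in> rcosets S. C #> inv h)"
proof -
  let ?X = "rcosets S"
  let ?\<phi> = "\<lambda>h. \<lambda>C \<in> rcosets S. C #> inv h"
  have Hc: "\<And>h. h \<in> H \<Longrightarrow> h \<in> carrier G" using subgroup.mem_carrier[OF H] .
  have Xc: "\<And>C. C \<in> ?X \<Longrightarrow> C \<subseteq> carrier G"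
    using rcosets_subset_PowG[OF S] by auto
  have bij: "?\<phi> h \<in> Bij ?X" if h: "h \<in> H" for h
  proof -
    have "bij_betw (?\<phi> h) ?X ?X"
    proof (rule bij_betwI[where g = "\<lambda>C. C #> h"])
      show "?\<phi> h \<in> ?X \<rightarrow> ?X" "(\<lambda>C. C #> h) \<in> ?X \<rightarrow> ?X"
        using rcosets_mult_closed[OF S] Hc[OF h] by auto
      show "?\<phi> h (C #> h) = C" "?\<phi> h C #> h = C" if "C \<in> ?X" for C
        using that Hc[OF h] Xc rcosets_mult_closed[OF S]
        by (simp_all add: coset_mult_assoc)
    qed
    thus ?thesis unfolding Bij_def by auto
  qed
  have hom: "?\<phi> (g \<otimes> h) = ?\<phi> g \<otimes>\<^bsub>BijGroup ?X\<^esub> ?\<phi> h" if g: "g \<in> H" and h: "h \<in> H" for g h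
  proof -
    have "?\<phi> (g \<otimes> h) C = ?\<phi> g (?\<phi> h C)" if "C \<in> ?X" for C
      using that Hc[OF g] Hc[OF h] Xc rcosets_mult_closed[OF S]
      by (simp add: coset_mult_assoc inv_mult_group)
    moreover have "\<And>C. C \<in> ?X \<Longrightarrow> C #> inv h \<in> ?X"
      using rcosets_mult_closed[OF S] Hc[OF h] by simp
    ultimately show ?thesis using bij[OF g] bij[OF h]
      by (intro ext) (simp add: BijGroup_def compose_def)
  qed
  show ?thesis
    unfolding group_action_def group_hom_def group_hom_axioms_def hom_def
    using subgroup_imp_group[OF H] group_BijGroup[of ?X] bij hom by (auto simp: BijGroup_def)
qed

lemma (in group) p_subgroup_fixes_rcoset:
  assumes fin: "finite (carrier G)" and S: "subgroup S G" and p: "Factorial_Ring.prime p"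
    and not_dvd: "\<not> p dvd card (rcosets S)" and H: "subgroup H G" "card H = p ^ k"
  shows "\<exists>g \<in> carrier G. \<forall>h \<in> H. S #> g #> h = S #> g"
proof (rule ccontr)
  assume no_fixed: "\<not> ?thesis"
  let ?X = "rcosets S"
  let ?\<phi> = "\<lambda>h. \<lambda>C \<in> rcosets S. C #> inv h"
  let ?H = "G\<lparr>carrier := H\<rparr>"
  interpret act: group_action ?H ?X ?\<phi> using rcosets_right_action[OF S H(1)] .
  have finX: "finite ?X"
    using rcosets_subset_PowG[OF S] fin by (meson finite_Pow_iff finite_subset)
  \<comment> \<open>orbits of the p-group H have p-power size, and none is a singleton\<close>
  have "p dvd card orb" if orb: "orb \<in> orbits ?H ?X ?\<phi>" for orb
  proof -
    obtain C where C: "C \<in> ?X" "orb = orbit ?H ?\<phi> C" using orb unfolding orbits_def by auto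
    have "card orb * card (stabilizer ?H ?\<phi> C) = p ^ k"
      using act.orbit_stabilizer_theorem[OF C(1)] C(2) H(2) by (simp add: order_def)
    then obtain i where i: "card orb = p ^ i"
      using divides_primepow_nat[OF p] by (metis dvd_triv_left)
    show ?thesis
    proof (cases i)
      case 0
      then obtain D where "orb = {D}" using i card_1_singletonE by auto
      hence fixed: "C #> inv h = C" if "h \<in> H" for h
        using act.orbit_refl[OF C(1)] C that unfolding orbit_def by auto
      obtain g where g: "g \<in> carrier G" "C = S #> g" using C(1) unfolding RCOSETS_def by auto
      have "S #> g #> h = S #> g" if "h \<in> H" for h
        using fixed[OF subgroup.m_inv_closed[OF H(1) that]] g(2) that
        by (simp add: subgroup.mem_carrier[OF H(1)])
      thus ?thesis using no_fixed g(1) by blast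
    qed (simp add: i)
  qed
  moreover have "card ?X = (\<Sum>orb \<in> orbits ?H ?X ?\<phi>. card orb)"
    using act.disjoint_sum[OF finX, of "\<lambda>_. 1::nat"] by simp
  ultimately have "p dvd card ?X" by (simp add: dvd_sum)
  thus False using not_dvd by simp
qed

lemma (in group) sylow_subgroup_exists:
  assumes fin: "finite (carrier G)" and p: "Factorial_Ring.prime p" and dvd: "p dvd order G"
  shows "\<exists>S. sylow_subgroup G p S"
proof -
  obtain m where "order G = p ^ multiplicity p (order G) * m"
    using multiplicity_dvd by blast
  then obtain S where "subgroup S G" "card S = p ^ multiplicity p (order G)"
    using sylow_thm[OF p is_group _ fin] by blast
  thus ?thesis using p dvd unfolding sylow_subgroup_def by blast
qed

lemma (in group) sylow_subgroup_index_not_dvd: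
  assumes fin: "finite (carrier G)" and S: "sylow_subgroup G p S"
  shows "\<not> p dvd card (rcosets S)"
proof
  assume "p dvd card (rcosets S)"
  then obtain r where r: "card (rcosets S) = p * r" by blast
  have p: "Factorial_Ring.prime p" and S_sub: "subgroup S G"
    and card_S: "card S = p ^ multiplicity p (order G)"
    using S unfolding sylow_subgroup_def by auto
  have "order G = p * r * p ^ multiplicity p (order G)"
    using lagrange[OF S_sub] r card_S by simp
  hence "p ^ Suc (multiplicity p (order G)) dvd order G"
    by (metis dvd_triv_left mult.assoc mult.commute power_Suc)
  moreover have "order G \<noteq> 0" using fin order_gt_0_iff_finite by auto
  moreover have "\<not> is_unit p" using prime_gt_1_nat[OF p] by simp
  ultimately have "Suc (multiplicity p (order G)) \<le> multiplicity p (order G)"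
    using multiplicity_geI by blast
  thus False by simp
qed

lemma (in group) prime_power_ord_in_conj_sylow:
  assumes fin: "finite (carrier G)" and S: "sylow_subgroup G p S"
    and x: "x \<in> carrier G" "ord x = p ^ k"
  shows "\<exists>h \<in> carrier G. x \<in> (\<lambda>s. h \<otimes> s \<otimes> inv h) ` S"
proof -
  have S_sub: "subgroup S G" and p: "Factorial_Ring.prime p"
    using S unfolding sylow_subgroup_def by auto
  have gen_sub: "subgroup (generate G {x}) G" using generate_is_subgroup x(1) by simp
  have gen_card: "card (generate G {x}) = p ^ k" using generate_pow_card[OF x(1)] x(2) by simp
  obtain g where g: "g \<in> carrier G" and fixed: "\<forall>h \<in> generate G {x}. S #> g #> h = S #> g"
    using p_subgroup_fixes_rcoset[OF fin S_sub p sylow_subgroup_index_not_dvd[OF fin S] gen_sub gen_card]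
    by blast
  have "x \<in> generate G {x}" using x(1) by (simp add: generate.incl)
  hence "S #> (g \<otimes> x) = S #> g"
    using fixed coset_mult_assoc[OF subgroup.subset[OF S_sub] g x(1)] by simp
  moreover have "g \<otimes> x \<in> S #> (g \<otimes> x)" using rcos_self[OF _ S_sub] g x(1) by simp
  ultimately obtain s where s: "s \<in> S" "g \<otimes> x = s \<otimes> g" unfolding r_coset_def by auto
  have "inv g \<otimes> (g \<otimes> x) = inv g \<otimes> (s \<otimes> g)" using s(2) by simp
  hence "x = inv g \<otimes> s \<otimes> inv (inv g)"
    using g x(1) subgroup.mem_carrier[OF S_sub s(1)] by (simp add: m_assoc[symmetric])
  thus ?thesis using g s(1) by blast
qed

section \<open>Edges of the Com-Pow graph\<close>

definition compow_edges :: "('a, 'b) monoid_scheme \<Rightarrow> ('a \<times> 'a) set" where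
  "compow_edges G =
     {(x, y). x \<in> carrier G - {\<one>\<^bsub>G\<^esub>} \<and> y \<in> carrier G - {\<one>\<^bsub>G\<^esub>} \<and> ComPow_adj G x y}"

lemma sym_compow_edges: "sym (compow_edges G)"
  unfolding compow_edges_def ComPow_adj_def by (auto intro: symI)

lemma compow_edges_rtrancl_sym: "(x, y) \<in> (compow_edges G)\<^sup>* \<Longrightarrow> (y, x) \<in> (compow_edges G)\<^sup>*"
  using sym_rtrancl[OF sym_compow_edges] by (rule symD)

lemma (in group) is_power_of_conj_iff:
  assumes "h \<in> carrier G" "x \<in> carrier G" "y \<in> carrier G"
  shows "is_power_of G (h \<otimes> x \<otimes> inv h) (h \<otimes> y \<otimes> inv h) \<longleftrightarrow> is_power_of G x y"
  using assms unfolding is_power_of_def by (simp add: conj_int_pow)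

lemma (in group) conj_compow_edge:
  assumes h: "h \<in> carrier G" and xy: "(x, y) \<in> compow_edges G"
  shows "(h \<otimes> x \<otimes> inv h, h \<otimes> y \<otimes> inv h) \<in> compow_edges G"
proof -
  have x: "x \<in> carrier G" and y: "y \<in> carrier G"
    and "x \<noteq> \<one>" "y \<noteq> \<one>" "x \<noteq> y" "x \<otimes> y = y \<otimes> x"
    and "\<not> is_power_of G x y" "\<not> is_power_of G y x"
    using xy unfolding compow_edges_def ComPow_adj_def by auto
  moreover have "(h \<otimes> x \<otimes> inv h) \<otimes> (h \<otimes> y \<otimes> inv h) = h \<otimes> (x \<otimes> y) \<otimes> inv h"
    "(h \<otimes> y \<otimes> inv h) \<otimes> (h \<otimes> x \<otimes> inv h) = h \<otimes> (y \<otimes> x) \<otimes> inv h"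
    using h x y by (simp_all add: m_assoc)
  ultimately show ?thesis
    using h is_power_of_conj_iff[OF h x y] is_power_of_conj_iff[OF h y x]
    unfolding compow_edges_def ComPow_adj_def by auto
qed

lemma (in group) conj_compow_path:
  assumes h: "h \<in> carrier G" and xy: "(x, y) \<in> (compow_edges G)\<^sup>*"
  shows "(h \<otimes> x \<otimes> inv h, h \<otimes> y \<otimes> inv h) \<in> (compow_edges G)\<^sup>*"
  using xy
proof (induction rule: rtrancl_induct)
  case (step y z)
  thus ?case using conj_compow_edge[OF h step(2)] by (meson rtrancl_into_rtrancl)
qed simp

lemma (in group) compow_edge_to_prime_ord:
  assumes fin: "finite (carrier G)" and p: "Factorial_Ring.prime p"
    and a: "a \<in> carrier G" "a \<noteq> \<one>" and b: "b \<in> carrier G" "ord b = p"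
    and comm: "a \<otimes> b = b \<otimes> a" and b_not_in: "b \<notin> generate G {a}"
  shows "(a, b) \<in> compow_edges G"
proof -
  have "b \<noteq> \<one>" using b p ord_eq_1 by (metis not_prime_1)
  moreover have "a \<notin> generate G {b}"
  proof
    assume a_in: "a \<in> generate G {b}"
    have "ord a dvd p" using ord_dvd_ord_of_generate[OF b(1) a_in] b(2) by simp
    hence "ord a = p" using a ord_eq_1 p by (metis prime_nat_iff)
    hence "b \<in> generate G {a}"
      using in_generate_of_same_prime_ord[OF fin p b(1) generate.incl[of b] b(2) a_in] by simp
    thus False using b_not_in by simp
  qed
  moreover have "a \<noteq> b" using b_not_in a(1) generate.incl by fast
  ultimately show ?thesis
    unfolding compow_edges_def ComPow_adj_def using is_power_of_iff_in_generate a b comm b_not_in by auto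
qed

lemma (in group) sylow_elem_compow_edge_to_centre:
  assumes fin: "finite (carrier G)" and S: "sylow_subgroup G p P"
    and not_cyclic: "\<not> cyclic_group (G\<lparr>carrier := group_centre G P\<rparr>)"
    and x: "x \<in> P" "x \<noteq> \<one>"
  shows "\<exists>z \<in> group_centre G P. ord z = p \<and> (x, z) \<in> compow_edges G"
proof -
  have P: "subgroup P G" and p: "Factorial_Ring.prime p" using S unfolding sylow_subgroup_def by auto
  have x_carrier: "x \<in> carrier G" using subgroup.mem_carrier[OF P x(1)] .
  obtain z where z: "z \<in> group_centre G P" "ord z = p" "z \<notin> generate G {x}"
    using sylow_centre_prime_ord_elem_not_in_generate[OF fin S not_cyclic x_carrier] by blast
  have "z \<in> carrier G" "x \<otimes> z = z \<otimes> x"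
    using z(1) x(1) subgroup.mem_carrier[OF P] unfolding group_centre_def by auto
  thus ?thesis using compow_edge_to_prime_ord[OF fin p x_carrier x(2) _ z(2) _ z(3)] z by blast
qed

lemma (in group) sylow_compow_path:
  assumes fin: "finite (carrier G)" and S: "sylow_subgroup G p P"
    and not_cyclic: "\<not> cyclic_group (G\<lparr>carrier := group_centre G P\<rparr>)"
    and x: "x \<in> P" "x \<noteq> \<one>" and y: "y \<in> P" "y \<noteq> \<one>"
  shows "(x, y) \<in> (compow_edges G)\<^sup>*"
proof -
  have P: "subgroup P G" and p: "Factorial_Ring.prime p" using S unfolding sylow_subgroup_def by auto
  have Zc: "\<And>z. z \<in> group_centre G P \<Longrightarrow> z \<in> carrier G"
    using subgroup.mem_carrier[OF group_centre_subgroup[OF P]] .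
  have Z_comm: "\<And>z w. z \<in> group_centre G P \<Longrightarrow> w \<in> group_centre G P \<Longrightarrow> z \<otimes> w = w \<otimes> z"
    unfolding group_centre_def by blast
  have Z_ne_one: "\<And>z. z \<in> group_centre G P \<Longrightarrow> ord z = p \<Longrightarrow> z \<noteq> \<one>"
    using p not_prime_1 ord_id by metis
  obtain zx where zx: "zx \<in> group_centre G P" "ord zx = p" "(x, zx) \<in> compow_edges G"
    using sylow_elem_compow_edge_to_centre[OF fin S not_cyclic x] by blast
  obtain zy where zy: "zy \<in> group_centre G P" "ord zy = p" "(y, zy) \<in> compow_edges G"
    using sylow_elem_compow_edge_to_centre[OF fin S not_cyclic y] by blast
  \<comment> \<open>Two central elements of order p are adjacent unless they generate the same subgroup;
    then both are adjacent to a central element of order p outside that subgroup.\<close>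
  have edge: "(z, w) \<in> compow_edges G"
    if "z \<in> group_centre G P" "ord z = p" "w \<in> group_centre G P" "ord w = p" "w \<notin> generate G {z}"
    for z w
    using compow_edge_to_prime_ord[OF fin p Zc[OF that(1)] Z_ne_one[OF that(1,2)] Zc[OF that(3)] that(4)
        Z_comm[OF that(1,3)] that(5)] .
  have "(zx, zy) \<in> (compow_edges G)\<^sup>*"
  proof (cases "zy \<in> generate G {zx}")
    case False
    show ?thesis using edge[OF zx(1,2) zy(1,2) False] by (rule r_into_rtrancl)
  next
    case True
    obtain c where c: "c \<in> group_centre G P" "ord c = p" "c \<notin> generate G {zx}"
      using sylow_centre_prime_ord_elem_not_in_generate[OF fin S not_cyclic Zc[OF zx(1)]] by blast
    have "c \<notin> generate G {zy}"
      using c(3) generate_singleton_mono[OF Zc[OF zx(1)] True] by blast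
    hence "(zx, c) \<in> compow_edges G" "(c, zy) \<in> compow_edges G"
      using edge[OF zx(1,2) c] symD[OF sym_compow_edges edge[OF zy(1,2) c(1,2)]] by auto
    thus ?thesis by (meson converse_rtrancl_into_rtrancl r_into_rtrancl)
  qed
  moreover have "(zy, y) \<in> compow_edges G" using symD[OF sym_compow_edges zy(3)] .
  ultimately show ?thesis using zx(3) by (meson converse_rtrancl_into_rtrancl rtrancl_into_rtrancl)
qed

lemma (in group) compow_edge_of_ord_prime_mult:
  assumes g: "g \<in> carrier G" and ord_g: "ord g = p * q" and p: "Factorial_Ring.prime p"
    and q: "Factorial_Ring.prime q" and pq: "p \<noteq> q"
  shows "(g [^] q, g [^] p) \<in> compow_edges G" "ord (g [^] q) = p" "ord (g [^] p) = q"
proof -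
  show ord_q: "ord (g [^] q) = p" and ord_p: "ord (g [^] p) = q"
    using ord_pow[OF g] ord_g p q by (simp_all add: prime_gt_0_nat)
  have "\<not> p dvd q" "\<not> q dvd p" using primes_dvd_imp_eq p q pq by blast+
  hence "g [^] q \<notin> generate G {g [^] p}" "g [^] p \<notin> generate G {g [^] q}"
    using ord_dvd_ord_of_generate[of "g [^] p" "g [^] q"] ord_dvd_ord_of_generate[of "g [^] q" "g [^] p"]
      ord_p ord_q g by auto
  moreover have "g [^] q \<noteq> \<one>" using ord_q p by (metis not_prime_1 ord_id)
  moreover have "g [^] p \<noteq> \<one>" using ord_p q by (metis not_prime_1 ord_id)
  moreover have "g [^] q \<noteq> g [^] p" using ord_p ord_q pq by metis
  ultimately show "(g [^] q, g [^] p) \<in> compow_edges G"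
    unfolding compow_edges_def ComPow_adj_def
    using is_power_of_iff_in_generate nat_pow_comm g by auto
qed

section \<open>Elements of prime-power order\<close>

definition prime_power_ord :: "('a, 'b) monoid_scheme \<Rightarrow> 'a \<Rightarrow> bool" where
  "prime_power_ord G x \<longleftrightarrow> (\<exists>p k. Factorial_Ring.prime p \<and> group.ord G x = p ^ k)"

lemma non_prime_power_coprime_factors:
  fixes n :: nat
  assumes "n \<noteq> 0" and not_pp: "\<nexists>p k. Factorial_Ring.prime p \<and> n = p ^ k"
  obtains a b where "n = a * b" "coprime a b" "a < n" "b < n"
proof -
  have "n \<noteq> 1" using not_pp two_is_prime_nat by (metis power_0)
  hence "\<not> is_unit n" by simp
  then obtain p k b where p: "Factorial_Ring.prime p" "\<not> p dvd b" "k > 0" "n = p ^ k * b"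
    using divide_out_primepow[OF assms(1)] by blast
  have "coprime (p ^ k) b" using prime_imp_coprime[OF p(1,2)] by simp
  moreover have "b \<noteq> 1" using not_pp p(1,4) by (metis mult.right_neutral)
  moreover have "b \<noteq> 0" using p(4) assms(1) by simp
  moreover have "p ^ k > 1" using one_less_power[OF prime_gt_1_nat[OF p(1)] p(3)] .
  moreover have "p ^ k < n" "b < n" using calculation(2-4) p(4) prime_gt_0_nat[OF p(1)] by simp_all
  ultimately show ?thesis using that[of "p ^ k" b] p(4) by blast
qed

lemma (in group) eq_mult_of_coprime_pows:
  fixes a b :: nat
  assumes x: "x \<in> carrier G" and ab: "coprime a b"
  obtains s t :: int where "x = (x [^] a) [^] s \<otimes> (x [^] b) [^] t"
proof -
  have "gcd (int a) (int b) = 1" using ab by (simp add: coprime_imp_gcd_eq_1)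
  then obtain s t where st: "int a * s + int b * t = 1"
    using bezout_int[of "int a" "int b"] by (metis mult.commute)
  have "x = x [^] (int a * s + int b * t)" using st x by simp
  also have "\<dots> = (x [^] a) [^] s \<otimes> (x [^] b) [^] t"
    using x by (simp add: int_pow_mult int_pow_pow[symmetric] int_pow_int)
  finally show ?thesis using that by blast
qed

lemma (in group) in_subgroup_if_prime_power_ord_pows_in:
  assumes fin: "finite (carrier G)" and H: "subgroup H G" and w: "w \<in> carrier G"
    and pows_in: "\<And>k::nat. prime_power_ord G (w [^] k) \<Longrightarrow> w [^] k \<in> H"
  shows "w \<in> H"
  using w pows_in
proof (induction "ord w" arbitrary: w rule: less_induct)
  case less
  show ?case
  proof (cases "prime_power_ord G w")
    case True
    thus ?thesis using less.prems(2)[of 1] less.prems(1) by simp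
  next
    case False
    have ord_w: "ord w \<noteq> 0" using ord_ge_1[OF fin less.prems(1)] by simp
    then obtain a b where ab: "ord w = a * b" "coprime a b" "a < ord w" "b < ord w"
      using False non_prime_power_coprime_factors[of "ord w"] unfolding prime_power_ord_def by metis
    have pow_in: "w [^] c \<in> H" if cd: "ord w = c * d" "d < ord w" for c d
    proof (rule less.hyps)
      show "ord (w [^] c) < ord w" using ord_pow[OF less.prems(1), of c] cd ord_w by simp
      show "(w [^] c) [^] k \<in> H" if "prime_power_ord G ((w [^] c) [^] k)" for k :: nat
        using less.prems that by (simp add: nat_pow_pow)
    qed (use less.prems(1) in simp)
    have "w [^] a \<in> H" "w [^] b \<in> H" using pow_in ab by (auto simp: mult.commute)
    moreover obtain s t :: int where "w = (w [^] a) [^] s \<otimes> (w [^] b) [^] t"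
      using eq_mult_of_coprime_pows[OF less.prems(1) ab(2)] .
    ultimately show ?thesis using subgroup_int_pow_closed[OF H] subgroup.m_closed[OF H] by metis
  qed
qed

lemma (in group) exists_prime_power_ord_neighbour:
  assumes fin: "finite (carrier G)" and not_pp: "\<not> prime_power_ord G x"
    and xw: "(x, w) \<in> compow_edges G"
  shows "\<exists>u. (x, u) \<in> compow_edges G \<and> prime_power_ord G u"
proof -
  have x: "x \<in> carrier G" "x \<noteq> \<one>" and w: "w \<in> carrier G" and comm: "x \<otimes> w = w \<otimes> x"
    and w_out: "w \<notin> generate G {x}"
    using xw is_power_of_iff_in_generate unfolding compow_edges_def ComPow_adj_def by auto
  \<comment> \<open>w is a product of powers of itself of prime-power order, so one of them lies outside <x>\<close>
  have "subgroup (generate G {x}) G" using generate_is_subgroup x(1) by simp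
  then obtain k :: nat where u: "prime_power_ord G (w [^] k)" "w [^] k \<notin> generate G {x}"
    using in_subgroup_if_prime_power_ord_pows_in[OF fin _ w] w_out by blast
  define u where "u = w [^] k"
  have u_carrier: "u \<in> carrier G" using u_def w by simp
  have "u \<noteq> \<one>" using u(2) u_def generate.one by metis
  moreover have "x \<otimes> u = u \<otimes> x" using group_commutes_pow[OF comm[symmetric] w x(1)] u_def by simp
  moreover have "x \<notin> generate G {u}"
  proof
    assume "x \<in> generate G {u}"
    hence "ord x dvd ord u" using ord_dvd_ord_of_generate[OF u_carrier] by blast
    moreover obtain p e where "Factorial_Ring.prime p" "ord u = p ^ e"
      using u(1) u_def unfolding prime_power_ord_def by blast
    ultimately show False using not_pp divides_primepow_nat unfolding prime_power_ord_def by metis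
  qed
  moreover have "x \<noteq> u" using u(2) u_def x(1) generate.incl by fast
  ultimately have "(x, u) \<in> compow_edges G"
    using x u_carrier u(2) u_def is_power_of_iff_in_generate
    unfolding compow_edges_def ComPow_adj_def by auto
  thus ?thesis using u(1) u_def by blast
qed

section \<open>Connectivity\<close>

definition component_stabilizer :: "('a, 'b) monoid_scheme \<Rightarrow> 'a \<Rightarrow> 'a set" where
  "component_stabilizer G a =
     {h \<in> carrier G. (a, h \<otimes>\<^bsub>G\<^esub> a \<otimes>\<^bsub>G\<^esub> inv\<^bsub>G\<^esub> h) \<in> (compow_edges G)\<^sup>*}"

lemma (in group) component_stabilizer_subgroup:
  assumes a: "a \<in> carrier G"
  shows "subgroup (component_stabilizer G a) G"
  unfolding component_stabilizer_def
proof (rule subgroupI)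
  let ?N = "{h \<in> carrier G. (a, h \<otimes> a \<otimes> inv h) \<in> (compow_edges G)\<^sup>*}"
  show "?N \<subseteq> carrier G" by blast
  show "?N \<noteq> {}" using a by auto
  show "inv h \<in> ?N" if h: "h \<in> ?N" for h
  proof -
    have hc: "h \<in> carrier G" and ha: "(a, h \<otimes> a \<otimes> inv h) \<in> (compow_edges G)\<^sup>*" using h by auto
    have "(inv h \<otimes> a \<otimes> inv (inv h), inv h \<otimes> (h \<otimes> a \<otimes> inv h) \<otimes> inv (inv h)) \<in> (compow_edges G)\<^sup>*"
      using conj_compow_path[OF inv_closed[OF hc] ha] .
    moreover have "inv h \<otimes> (h \<otimes> a \<otimes> inv h) \<otimes> inv (inv h) = a" using hc a by (simp add: m_assoc)
    ultimately show ?thesis using hc compow_edges_rtrancl_sym by auto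
  qed
  show "g \<otimes> h \<in> ?N" if g: "g \<in> ?N" and h: "h \<in> ?N" for g h
  proof -
    have gc: "g \<in> carrier G" and hc: "h \<in> carrier G"
      and ga: "(a, g \<otimes> a \<otimes> inv g) \<in> (compow_edges G)\<^sup>*"
      and ha: "(a, h \<otimes> a \<otimes> inv h) \<in> (compow_edges G)\<^sup>*" using g h by auto
    have "(g \<otimes> a \<otimes> inv g, g \<otimes> (h \<otimes> a \<otimes> inv h) \<otimes> inv g) \<in> (compow_edges G)\<^sup>*"
      using conj_compow_path[OF gc ha] .
    moreover have "g \<otimes> (h \<otimes> a \<otimes> inv h) \<otimes> inv g = (g \<otimes> h) \<otimes> a \<otimes> inv (g \<otimes> h)"
      using gc hc a by (simp add: m_assoc inv_mult_group)
    ultimately have "(a, (g \<otimes> h) \<otimes> a \<otimes> inv (g \<otimes> h)) \<in> (compow_edges G)\<^sup>*"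
      using ga by (metis rtrancl_trans)
    thus ?thesis using gc hc by blast
  qed
qed

lemma (in group) prime_of_prime_power_ord_in_GK_vertices:
  assumes x: "x \<in> carrier G" "x \<noteq> \<one>" and p: "Factorial_Ring.prime p" and ord_x: "ord x = p ^ k"
  shows "p \<in> GK_vertices G"
proof -
  have "k \<noteq> 0" using x ord_x ord_eq_1[OF x(1)] by (metis power_0)
  hence "p dvd ord x" using ord_x by simp
  thus ?thesis using ord_dvd_group_order[OF x(1)] p unfolding GK_vertices_def by (auto intro: dvd_trans)
qed

lemma (in group) compow_path_to_prime_power_ord:
  assumes fin: "finite (carrier G)" and u: "u \<in> carrier G - {\<one>}"
    and not_isolated: "\<exists>w \<in> carrier G - {\<one>}. w \<noteq> u \<and> ComPow_adj G u w"
  shows "\<exists>v \<in> carrier G - {\<one>}. prime_power_ord G v \<and> (u, v) \<in> (compow_edges G)\<^sup>*"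
proof (cases "prime_power_ord G u")
  case False
  obtain w where "(u, w) \<in> compow_edges G"
    using u not_isolated unfolding compow_edges_def by auto
  then obtain v where "(u, v) \<in> compow_edges G" "prime_power_ord G v"
    using exists_prime_power_ord_neighbour[OF fin False] by blast
  thus ?thesis unfolding compow_edges_def by auto
qed (use u in blast)

lemma (in group) subgroup_eq_carrier_if_contains_sylows:
  assumes fin: "finite (carrier G)" and N: "subgroup N G"
    and sylows: "\<And>p. Factorial_Ring.prime p \<Longrightarrow> p dvd order G \<Longrightarrow> \<exists>S. sylow_subgroup G p S \<and> S \<subseteq> N"
  shows "N = carrier G"
proof -
  have N_carrier: "N \<subseteq> carrier G" using subgroup.subset[OF N] .
  have "finite N" using finite_subset[OF N_carrier fin] .
  hence "card N \<noteq> 0" using subgroup.one_closed[OF N] by auto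
  have "order G dvd card N"
  proof (rule multiplicity_le_imp_dvd)
    show "order G \<noteq> 0" using fin order_gt_0_iff_finite by auto
    fix p :: nat assume p: "Factorial_Ring.prime p"
    show "multiplicity p (order G) \<le> multiplicity p (card N)"
    proof (cases "p dvd order G")
      case True
      then obtain S where S: "sylow_subgroup G p S" "S \<subseteq> N" using sylows p by blast
      hence "subgroup S G" unfolding sylow_subgroup_def by blast
      hence "card S dvd card N" using S(2) by (rule card_subgroup_dvd[OF _ N])
      hence "p ^ multiplicity p (order G) dvd card N" using S(1) unfolding sylow_subgroup_def by simp
      moreover have "\<not> is_unit p" using prime_gt_1_nat[OF p] by simp
      ultimately show ?thesis using multiplicity_geI \<open>card N \<noteq> 0\<close> by blast
    qed (simp add: not_dvd_imp_multiplicity_0)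
  qed
  hence "card (carrier G) \<le> card N" using \<open>card N \<noteq> 0\<close> by (simp add: dvd_imp_le order_def)
  thus ?thesis using card_mono[OF fin N_carrier] by (intro card_subset_eq[OF fin N_carrier]) simp
qed

definition sylow_meets_component :: "('a, 'b) monoid_scheme \<Rightarrow> 'a \<Rightarrow> nat \<Rightarrow> bool" where
  "sylow_meets_component G a p \<longleftrightarrow>
     (\<exists>S. sylow_subgroup G p S \<and> (\<exists>y \<in> S. y \<noteq> \<one>\<^bsub>G\<^esub> \<and> (a, y) \<in> (compow_edges G)\<^sup>*))"

locale sylow_centres_noncyclic = group +
  assumes finite_carrier: "finite (carrier G)"
    and sylow_centre_not_cyclic:
      "sylow_subgroup G p P \<Longrightarrow> \<not> cyclic_group (G\<lparr>carrier := group_centre G P\<rparr>)"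
begin

lemma prime_power_ord_compow_path_from_conj:
  assumes S: "sylow_subgroup G p S" and y: "y \<in> S" "y \<noteq> \<one>"
    and x: "x \<in> carrier G" "x \<noteq> \<one>" "ord x = p ^ k"
  shows "\<exists>h \<in> carrier G. (h \<otimes> y \<otimes> inv h, x) \<in> (compow_edges G)\<^sup>*"
proof -
  obtain h where h: "h \<in> carrier G" and x_in: "x \<in> (\<lambda>s. h \<otimes> s \<otimes> inv h) ` S"
    using prime_power_ord_in_conj_sylow[OF finite_carrier S x(1,3)] by blast
  have S': "sylow_subgroup G p ((\<lambda>s. h \<otimes> s \<otimes> inv h) ` S)" using sylow_subgroup_conj[OF S h] .
  have "subgroup S G" using S unfolding sylow_subgroup_def by blast
  hence "y \<in> carrier G" using y(1) by (rule subgroup.mem_carrier)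
  hence "h \<otimes> y \<otimes> inv h \<noteq> \<one>" using h y(2) by simp
  thus ?thesis
    using sylow_compow_path[OF finite_carrier S' sylow_centre_not_cyclic[OF S'] _ _ x_in x(2)] y(1) h
    by blast
qed

lemma sylow_subset_component_stabilizer:
  assumes S: "sylow_subgroup G p S" and z: "z \<in> S" "z \<noteq> \<one>" "(a, z) \<in> (compow_edges G)\<^sup>*"
  shows "S \<subseteq> component_stabilizer G a"
  unfolding component_stabilizer_def
proof
  fix h assume h: "h \<in> S"
  have S_sub: "subgroup S G" using S unfolding sylow_subgroup_def by blast
  have hc: "h \<in> carrier G" and zc: "z \<in> carrier G" using subgroup.mem_carrier[OF S_sub] h z(1) by auto
  have "h \<otimes> z \<otimes> inv h \<in> S" using S_sub h z(1) by (simp add: subgroup.m_closed subgroup.m_inv_closed)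
  moreover have "h \<otimes> z \<otimes> inv h \<noteq> \<one>" using hc zc z(2) by simp
  ultimately have "(z, h \<otimes> z \<otimes> inv h) \<in> (compow_edges G)\<^sup>*"
    using sylow_compow_path[OF finite_carrier S sylow_centre_not_cyclic[OF S] z(1,2)] by blast
  moreover have "(h \<otimes> z \<otimes> inv h, h \<otimes> a \<otimes> inv h) \<in> (compow_edges G)\<^sup>*"
    using compow_edges_rtrancl_sym[OF conj_compow_path[OF hc z(3)]] .
  ultimately have "(a, h \<otimes> a \<otimes> inv h) \<in> (compow_edges G)\<^sup>*"
    using z(3) by (meson rtrancl_trans)
  thus "h \<in> {h \<in> carrier G. (a, h \<otimes> a \<otimes> inv h) \<in> (compow_edges G)\<^sup>*}" using hc by blast
qed

lemma sylow_meets_component_GK_adj: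
  assumes p: "Factorial_Ring.prime p" and q: "Factorial_Ring.prime q" and adj: "GK_adj G p q"
    and meets: "sylow_meets_component G a p"
  shows "sylow_meets_component G a q"
proof -
  obtain g where g: "g \<in> carrier G" "ord g = p * q" and pq: "p \<noteq> q"
    using adj unfolding GK_adj_def by blast
  obtain S y where S: "sylow_subgroup G p S" and y: "y \<in> S" "y \<noteq> \<one>" "(a, y) \<in> (compow_edges G)\<^sup>*"
    using meets unfolding sylow_meets_component_def by blast
  note gpq = compow_edge_of_ord_prime_mult[OF g p q pq]
  have "subgroup S G" using S unfolding sylow_subgroup_def by blast
  hence yc: "y \<in> carrier G" using y(1) by (rule subgroup.mem_carrier)
  have gq: "g [^] q \<noteq> \<one>" "g [^] p \<noteq> \<one>" using gpq(1) unfolding compow_edges_def by auto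
  have ord_gq: "ord (g [^] q) = p ^ 1" using gpq(2) by simp
  from prime_power_ord_compow_path_from_conj[OF S y(1,2) nat_pow_closed[OF g(1)] gq(1) ord_gq]
  obtain h where h: "h \<in> carrier G" and "(h \<otimes> y \<otimes> inv h, g [^] q) \<in> (compow_edges G)\<^sup>*" ..
  from this(2) have "(h \<otimes> y \<otimes> inv h, g [^] p) \<in> (compow_edges G)\<^sup>*" by (rule rtrancl_into_rtrancl[OF _ gpq(1)])
  \<comment> \<open>conjugating back by h turns this into a path from y to an element of order q\<close>
  from conj_compow_path[OF inv_closed[OF h] this]
  have "(inv h \<otimes> (h \<otimes> y \<otimes> inv h) \<otimes> inv (inv h), inv h \<otimes> g [^] p \<otimes> inv (inv h))
          \<in> (compow_edges G)\<^sup>*" .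
  moreover have "inv h \<otimes> (h \<otimes> y \<otimes> inv h) \<otimes> inv (inv h) = y" using yc h by (simp add: m_assoc)
  ultimately have path: "(a, inv h \<otimes> g [^] p \<otimes> inv (inv h)) \<in> (compow_edges G)\<^sup>*"
    using rtrancl_trans[OF y(3)] by simp
  define b where "b = inv h \<otimes> g [^] p \<otimes> inv (inv h)"
  have b: "b \<in> carrier G" "ord b = q ^ 1" "b \<noteq> \<one>"
    using ord_conj[of "inv h" "g [^] p"] conj_eq_one_iff[of "inv h" "g [^] p"] gpq(3) gq(2) h g(1)
    unfolding b_def by (simp_all del: inv_inv conj_eq_one_iff)
  have "q dvd order G" using ord_dvd_group_order[OF g(1)] g(2) by (metis dvd_mult_right)
  then obtain T where T: "sylow_subgroup G q T" using sylow_subgroup_exists[OF finite_carrier q] by blast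
  then obtain h' where h': "h' \<in> carrier G" "b \<in> (\<lambda>s. h' \<otimes> s \<otimes> inv h') ` T"
    using prime_power_ord_in_conj_sylow[OF finite_carrier T b(1,2)] by blast
  thus ?thesis
    using sylow_subgroup_conj[OF T h'(1)] b(3) path unfolding sylow_meets_component_def b_def by blast
qed

lemma sylow_meets_component_GK_vertices:
  assumes GK: "graph_connected (GK_vertices G) (GK_adj G)"
    and p: "p \<in> GK_vertices G" and meets: "sylow_meets_component G a p"
    and q: "q \<in> GK_vertices G"
  shows "sylow_meets_component G a q"
proof -
  have "(p, q) \<in> {(x, y). x \<in> GK_vertices G \<and> y \<in> GK_vertices G \<and> GK_adj G x y}\<^sup>*"
    using GK p q unfolding graph_connected_def by blast
  thus ?thesis
  proof (induction rule: rtrancl_induct)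
    case (step r s)
    hence "Factorial_Ring.prime r" "Factorial_Ring.prime s" "GK_adj G r s"
      unfolding GK_vertices_def by auto
    thus ?case using sylow_meets_component_GK_adj[OF _ _ _ step.IH] by blast
  qed (rule meets)
qed

lemma component_stabilizer_eq_carrier:
  assumes a: "a \<in> carrier G" and meets: "\<And>q. q \<in> GK_vertices G \<Longrightarrow> sylow_meets_component G a q"
  shows "component_stabilizer G a = carrier G"
proof (rule subgroup_eq_carrier_if_contains_sylows[OF finite_carrier component_stabilizer_subgroup[OF a]])
  fix q assume "Factorial_Ring.prime q" "q dvd order G"
  then obtain S z where S: "sylow_subgroup G q S"
    and z: "z \<in> S" "z \<noteq> \<one>" "(a, z) \<in> (compow_edges G)\<^sup>*"
    using meets unfolding GK_vertices_def sylow_meets_component_def by blast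
  thus "\<exists>S. sylow_subgroup G q S \<and> S \<subseteq> component_stabilizer G a"
    using sylow_subset_component_stabilizer[OF S z] by blast
qed

lemma sylow_meets_component_of_prime_power_ord:
  assumes GK: "graph_connected (GK_vertices G) (GK_adj G)"
    and x: "x \<in> carrier G" "x \<noteq> \<one>" and p: "Factorial_Ring.prime p" and ord_x: "ord x = p ^ k"
    and q: "q \<in> GK_vertices G"
  shows "sylow_meets_component G x q"
proof -
  have p_vertex: "p \<in> GK_vertices G"
    using prime_of_prime_power_ord_in_GK_vertices[OF x p ord_x] .
  then obtain S where S: "sylow_subgroup G p S"
    using sylow_subgroup_exists[OF finite_carrier p] unfolding GK_vertices_def by blast
  then obtain h where h: "h \<in> carrier G" and x_in: "x \<in> (\<lambda>s. h \<otimes> s \<otimes> inv h) ` S"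
    using prime_power_ord_in_conj_sylow[OF finite_carrier S x(1) ord_x] by blast
  have "sylow_meets_component G x p"
    using sylow_subgroup_conj[OF S h] x_in x(2) unfolding sylow_meets_component_def by blast
  thus ?thesis using sylow_meets_component_GK_vertices[OF GK p_vertex _ q] by blast
qed

lemma prime_power_ord_elems_compow_connected:
  assumes GK: "graph_connected (GK_vertices G) (GK_adj G)"
    and x: "x \<in> carrier G" "x \<noteq> \<one>" "prime_power_ord G x"
    and y: "y \<in> carrier G" "y \<noteq> \<one>" "prime_power_ord G y"
  shows "(x, y) \<in> (compow_edges G)\<^sup>*"
proof -
  obtain p k where p: "Factorial_Ring.prime p" "ord x = p ^ k"
    using x(3) unfolding prime_power_ord_def by blast
  obtain q l where q: "Factorial_Ring.prime q" "ord y = q ^ l"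
    using y(3) unfolding prime_power_ord_def by blast
  have meets: "\<And>r. r \<in> GK_vertices G \<Longrightarrow> sylow_meets_component G x r"
    using sylow_meets_component_of_prime_power_ord[OF GK x(1,2) p] by blast
  \<comment> \<open>the component of x is closed under conjugation, since the conjugators that fix it contain a
    Sylow subgroup for every prime\<close>
  have stab: "component_stabilizer G x = carrier G"
    using component_stabilizer_eq_carrier[OF x(1) meets] .
  obtain T t where T: "sylow_subgroup G q T" and t: "t \<in> T" "t \<noteq> \<one>" "(x, t) \<in> (compow_edges G)\<^sup>*"
    using meets[OF prime_of_prime_power_ord_in_GK_vertices[OF y(1,2) q]]
    unfolding sylow_meets_component_def by blast
  from prime_power_ord_compow_path_from_conj[OF T t(1,2) y(1,2) q(2)]
  obtain h where h: "h \<in> carrier G" and "(h \<otimes> t \<otimes> inv h, y) \<in> (compow_edges G)\<^sup>*" ..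
  moreover have "(x, h \<otimes> x \<otimes> inv h) \<in> (compow_edges G)\<^sup>*"
    using stab h unfolding component_stabilizer_def by blast
  moreover have "(h \<otimes> x \<otimes> inv h, h \<otimes> t \<otimes> inv h) \<in> (compow_edges G)\<^sup>*"
    using conj_compow_path[OF h t(3)] .
  ultimately show ?thesis by (meson rtrancl_trans)
qed

lemma compow_connected_if_no_isolated:
  assumes GK: "graph_connected (GK_vertices G) (GK_adj G)"
    and not_isolated: "\<And>u. u \<in> carrier G - {\<one>} \<Longrightarrow> \<exists>w \<in> carrier G - {\<one>}. w \<noteq> u \<and> ComPow_adj G u w"
    and u: "u \<in> carrier G - {\<one>}" and v: "v \<in> carrier G - {\<one>}"
  shows "(u, v) \<in> (compow_edges G)\<^sup>*"
proof -
  obtain u' where u': "u' \<in> carrier G - {\<one>}" "prime_power_ord G u'" "(u, u') \<in> (compow_edges G)\<^sup>*"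
    using compow_path_to_prime_power_ord[OF finite_carrier u not_isolated[OF u]] by blast
  obtain v' where v': "v' \<in> carrier G - {\<one>}" "prime_power_ord G v'" "(v, v') \<in> (compow_edges G)\<^sup>*"
    using compow_path_to_prime_power_ord[OF finite_carrier v not_isolated[OF v]] by blast
  have "(u', v') \<in> (compow_edges G)\<^sup>*"
    using prime_power_ord_elems_compow_connected[OF GK] u'(1,2) v'(1,2) by blast
  thus ?thesis using u'(3) compow_edges_rtrancl_sym[OF v'(3)] by (meson rtrancl_trans)
qed

end

theorem mainTheorem20:
  fixes G :: "('a, 'b) monoid_scheme"
  assumes "group G"
    and "finite (carrier G)"
    and "graph_connected (GK_vertices G) (GK_adj G)"
    and "\<And>p P. sylow_subgroup G p P \<Longrightarrow>
           \<not> cyclic_group (G\<lparr>carrier := group_centre G P\<rparr>)"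
  shows "has_isolated_vertex (carrier G - {\<one>\<^bsub>G\<^esub>}) (ComPow_adj G)
         \<or> graph_connected (carrier G - {\<one>\<^bsub>G\<^esub>}) (ComPow_adj G)"
proof (cases "has_isolated_vertex (carrier G - {\<one>\<^bsub>G\<^esub>}) (ComPow_adj G)")
  case False
  interpret sylow_centres_noncyclic G
    using assms(1,2,4) by (simp add: sylow_centres_noncyclic_def sylow_centres_noncyclic_axioms_def)
  have "\<And>u. u \<in> carrier G - {\<one>\<^bsub>G\<^esub>} \<Longrightarrow>
      \<exists>w \<in> carrier G - {\<one>\<^bsub>G\<^esub>}. w \<noteq> u \<and> ComPow_adj G u w"
    using False unfolding has_isolated_vertex_def by blast
  hence "\<forall>u \<in> carrier G - {\<one>\<^bsub>G\<^esub>}. \<forall>v \<in> carrier G - {\<one>\<^bsub>G\<^esub>}. (u, v) \<in> (compow_edges G)\<^sup>*"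
    using compow_connected_if_no_isolated[OF assms(3)] by blast
  thus ?thesis by (simp add: graph_connected_def compow_edges_def)
qed simp

end
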